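(* ($\Rightarrow_{\mathrm{AP}}$ is a Terminating Over-Approximation.) Let $N$ be a finite set of constrained clauses. (i) There is no infinite sequence $N=N_0\Rightarrow_{\mathrm{AP}}N_1\Rightarrow_{\mathrm{AP}}N_2\Rightarrow_{\mathrm{AP}}\cdots$ (i.e. $\Rightarrow_{\mathrm{AP}}^*$ terminates). (ii) If $N\Rightarrow_{\mathrm{AP}}N'$ and $N'$ is satisfiable, then $N$ is satisfiable.
   Context: Clauses are written $\Gamma\rightarrow\Delta$ with $\Gamma,\Delta$ finite multisets of atoms (negative resp. positive literals); $\dot\cup$ denotes disjoint union. For an atom or term $E$, $E[s]_p$ means $E|_p=s$ and $E[p/s']$ the result of replacing the subterm at position $p$ by $s'$; $E[x]_{p,q}$ means $x$ occurs at positions $p$ and $q$. A term is complex if it is not a variable. A variable and a constant are straight; $f(s_1,\dots,s_n)$ is straight if the $s_i$ are pairwise distinct variables except for at most one straight argument. A constraint $\pi=\bigwedge_i t_i\neq s_i$ is a finite conjunction of disequations ($t_i,s_i$ variable-disjoint, $s_i$ straight); $\pi\sigma=\bigwedge_i t_i\sigma\neq s_i$; a solution is a grounding substitution $\delta$ with no $t_i\delta$ an instance of $s_i$. A constrained clause is $(C;\pi)$; its ground instances are $C\delta$ for solutions $\delta$ of $\pi$ grounding all variables of $C$ and the $t_i$; a Herbrand interpretation $I$ (set of ground atoms) satisfies a ground clause $\Gamma\rightarrow\Delta$ if $\Delta\cap I\neq\emptyset$ or $\Gamma\not\subseteq I$, satisfies $(C;\pi)$ if it satisfies all its ground instances; a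 set is satisfiable if it has such a model. Clauses in a set are assumed pairwise variable-disjoint. Fix a monadic predicate $T$ fresh to $N$ and, for each non-monadic predicate $P$, a function symbol $f_P$ fresh to $N$. $\mathrm{Proj}_P^T$ maps an atom $P(t_1,\dots,t_n)$ to $T(f_P(t_1,\dots,t_n))$ and leaves atoms with other predicates unchanged; it is extended to (constrained) clauses and clause sets. The transformation rules are: Monadic (MO): $N\Rightarrow\mathrm{Proj}_P^T(N)$, provided $P$ is a non-monadic predicate in the signature of $N$. Shallow (SH): $N\,\dot\cup\,\{(\Gamma\rightarrow E[s]_p,\Delta;\pi)\}\Rightarrow N\cup\{(S(x),\Gamma_l\rightarrow E[p/x],\Delta_l;\pi),\ (\Gamma_r\rightarrow S(s),\Delta_r;\pi)\}$, provided $s$ is complex, $|p|=2$, $x$ is a fresh variable and $S$ a fresh monadic predicate, $\Gamma_l\{x\mapsto s\}\cup\Gamma_r=\Gamma$, $\Delta_l\cup\Delta_r=\Delta$, $\{Q(y)\in\Gamma\mid y\in\mathrm{vars}(E[p/x],\Delta_l)\}\subseteq\Gamma_l$ and $\{Q(y)\in\Gamma\mid y\in\mathrm{vars}(s,\Delta_r)\}\subseteq\Gamma_r$. Linear 1 (LI): $N\,\dot\cup\,\{(\Gamma\rightarrow\Delta,E'[x]_p,E[x]_q;\pi)\}\Rightarrow N\cup\{(\Gamma\sigma,\Gamma\rightarrow\Delta,E'[x]_p,E[q/x'];\pi\wedge\pi\sigma)\}$, with $x'$ fresh and $\sigma=\{x\mapsto x'\}$. Linear 2 (LI): $N\,\dot\cup\,\{(\Gamma\rightarrow\Delta,E[x]_{p,q};\pi)\}\Rightarrow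 N\cup\{(\Gamma\sigma,\Gamma\rightarrow\Delta,E[q/x'];\pi\wedge\pi\sigma)\}$, with $x'$ fresh, $p\neq q$, $\sigma=\{x\mapsto x'\}$. Refinement (Ref): $N\,\dot\cup\,\{(C;\pi)\}\Rightarrow N\cup\{(C;\pi\wedge x\neq t),(C;\pi)\{x\mapsto t\}\}$, provided $x\in\mathrm{vars}(C)$, $t$ is straight and $\mathrm{vars}(t)\cap\mathrm{vars}((C;\pi))=\emptyset$. $\Rightarrow_{\mathrm{AP}}$ is the priority rewrite system consisting of these rules with priority Ref $>$ MO $>$ SH $>$ LI (a rule is applied only if no higher-priority rule is applicable), where Ref is applied only finitely many times. *)

theory Defs
  imports Main "HOL-Library.Multiset"
begin

text \<open>Untyped first-order terms; a function symbol is a name together with the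
  number of its arguments, likewise a predicate.  The Herbrand universe is the set
  of all ground terms.\<close>

datatype ('f, 'v) trm = Var 'v | Fun 'f "('f, 'v) trm list"

datatype ('p, 'f, 'v) atom = Atom 'p "('f, 'v) trm list"

fun vars_t :: "('f, 'v) trm \<Rightarrow> 'v set" where
  "vars_t (Var x) = {x}"
| "vars_t (Fun f ts) = \<Union> (set (map vars_t ts))"

fun funs_t :: "('f, 'v) trm \<Rightarrow> ('f \<times> nat) set" where
  "funs_t (Var x) = {}"
| "funs_t (Fun f ts) = insert (f, length ts) (\<Union> (set (map funs_t ts)))"

fun tsubst :: "('v \<Rightarrow> ('f, 'v) trm) \<Rightarrow> ('f, 'v) trm \<Rightarrow> ('f, 'v) trm" where
  "tsubst \<sigma> (Var x) = \<sigma> x"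
| "tsubst \<sigma> (Fun f ts) = Fun f (map (tsubst \<sigma>) ts)"

definition ground_t :: "('f, 'v) trm \<Rightarrow> bool" where
  "ground_t t \<longleftrightarrow> vars_t t = {}"

text \<open>Positions: lists of (0-based) argument indices.\<close>

fun term_at :: "('f, 'v) trm \<Rightarrow> nat list \<Rightarrow> ('f, 'v) trm option" where
  "term_at t [] = Some t"
| "term_at (Var x) (i # p) = None"
| "term_at (Fun f ts) (i # p) = (if i < length ts then term_at (ts ! i) p else None)"

fun replace_at :: "('f, 'v) trm \<Rightarrow> nat list \<Rightarrow> ('f, 'v) trm \<Rightarrow> ('f, 'v) trm" where
  "replace_at t [] s = s"
| "replace_at (Var x) (i # p) s = Var x"
| "replace_at (Fun f ts) (i # p) s = Fun f (ts[i := replace_at (ts ! i) p s])"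

text \<open>Positions in atoms: the first index selects the argument of the predicate.\<close>

fun atom_at :: "('p, 'f, 'v) atom \<Rightarrow> nat list \<Rightarrow> ('f, 'v) trm option" where
  "atom_at (Atom P ts) [] = None"
| "atom_at (Atom P ts) (i # p) = (if i < length ts then term_at (ts ! i) p else None)"

fun atom_replace :: "('p, 'f, 'v) atom \<Rightarrow> nat list \<Rightarrow> ('f, 'v) trm \<Rightarrow> ('p, 'f, 'v) atom" where
  "atom_replace (Atom P ts) [] s = Atom P ts"
| "atom_replace (Atom P ts) (i # p) s = Atom P (ts[i := replace_at (ts ! i) p s])"

fun vars_a :: "('p, 'f, 'v) atom \<Rightarrow> 'v set" where
  "vars_a (Atom P ts) = \<Union> (set (map vars_t ts))"

fun funs_a :: "('p, 'f, 'v) atom \<Rightarrow> ('f \<times> nat) set" where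
  "funs_a (Atom P ts) = \<Union> (set (map funs_t ts))"

fun pred_a :: "('p, 'f, 'v) atom \<Rightarrow> 'p \<times> nat" where
  "pred_a (Atom P ts) = (P, length ts)"

fun asubst :: "('v \<Rightarrow> ('f, 'v) trm) \<Rightarrow> ('p, 'f, 'v) atom \<Rightarrow> ('p, 'f, 'v) atom" where
  "asubst \<sigma> (Atom P ts) = Atom P (map (tsubst \<sigma>) ts)"

definition ground_a :: "('p, 'f, 'v) atom \<Rightarrow> bool" where
  "ground_a A \<longleftrightarrow> vars_a A = {}"

inductive straight :: "('f, 'v) trm \<Rightarrow> bool" where
  straight_Var: "straight (Var x)"
| straight_vars: "distinct xs \<Longrightarrow> straight (Fun f (map Var xs))"
| straight_one: "straight s \<Longrightarrow> distinct (xs @ ys) \<Longrightarrow>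
    straight (Fun f (map Var xs @ s # map Var ys))"

text \<open>A clause \<open>\<Gamma> \<rightarrow> \<Delta>\<close> is a pair of multisets of atoms; a constraint
  \<open>\<And>i t_i \<noteq> s_i\<close> is the list of pairs \<open>(t_i, s_i)\<close>; conjunction is append.\<close>

type_synonym ('p, 'f, 'v) clause = "('p, 'f, 'v) atom multiset \<times> ('p, 'f, 'v) atom multiset"
type_synonym ('f, 'v) constr = "(('f, 'v) trm \<times> ('f, 'v) trm) list"
type_synonym ('p, 'f, 'v) cclause = "('p, 'f, 'v) clause \<times> ('f, 'v) constr"

definition vars_ms :: "('p, 'f, 'v) atom multiset \<Rightarrow> 'v set" where
  "vars_ms M = \<Union> (vars_a ` set_mset M)"

fun vars_cl :: "('p, 'f, 'v) clause \<Rightarrow> 'v set" where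
  "vars_cl (\<Gamma>, \<Delta>) = vars_ms \<Gamma> \<union> vars_ms \<Delta>"

definition vars_lhs :: "('f, 'v) constr \<Rightarrow> 'v set" where
  "vars_lhs \<pi> = \<Union> ((\<lambda>(t, s). vars_t t) ` set \<pi>)"

definition vars_constr :: "('f, 'v) constr \<Rightarrow> 'v set" where
  "vars_constr \<pi> = \<Union> ((\<lambda>(t, s). vars_t t \<union> vars_t s) ` set \<pi>)"

fun vars_cc :: "('p, 'f, 'v) cclause \<Rightarrow> 'v set" where
  "vars_cc (C, \<pi>) = vars_cl C \<union> vars_constr \<pi>"

fun csubst :: "('v \<Rightarrow> ('f, 'v) trm) \<Rightarrow> ('p, 'f, 'v) clause \<Rightarrow> ('p, 'f, 'v) clause" where
  "csubst \<sigma> (\<Gamma>, \<Delta>) = (image_mset (asubst \<sigma>) \<Gamma>, image_mset (asubst \<sigma>) \<Delta>)"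

definition constr_subst :: "('v \<Rightarrow> ('f, 'v) trm) \<Rightarrow> ('f, 'v) constr \<Rightarrow> ('f, 'v) constr" where
  "constr_subst \<sigma> \<pi> = map (\<lambda>(t, s). (tsubst \<sigma> t, s)) \<pi>"

definition wf_constr :: "('f, 'v) constr \<Rightarrow> bool" where
  "wf_constr \<pi> \<longleftrightarrow> (\<forall>(t, s) \<in> set \<pi>. vars_t t \<inter> vars_t s = {} \<and> straight s)"

fun wf_cclause :: "('p, 'f, 'v) cclause \<Rightarrow> bool" where
  "wf_cclause (C, \<pi>) = wf_constr \<pi>"

fun preds_cc :: "('p, 'f, 'v) cclause \<Rightarrow> ('p \<times> nat) set" where
  "preds_cc ((\<Gamma>, \<Delta>), \<pi>) = pred_a ` set_mset (\<Gamma> + \<Delta>)"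

fun funs_cc :: "('p, 'f, 'v) cclause \<Rightarrow> ('f \<times> nat) set" where
  "funs_cc ((\<Gamma>, \<Delta>), \<pi>) = \<Union> (funs_a ` set_mset (\<Gamma> + \<Delta>))
     \<union> \<Union> ((\<lambda>(t, s). funs_t t \<union> funs_t s) ` set \<pi>)"

definition preds :: "('p, 'f, 'v) cclause set \<Rightarrow> ('p \<times> nat) set" where
  "preds N = \<Union> (preds_cc ` N)"

definition funs :: "('p, 'f, 'v) cclause set \<Rightarrow> ('f \<times> nat) set" where
  "funs N = \<Union> (funs_cc ` N)"

definition grounding_on :: "('v \<Rightarrow> ('f, 'v) trm) \<Rightarrow> 'v set \<Rightarrow> bool" where
  "grounding_on \<delta> V \<longleftrightarrow> (\<forall>v \<in> V. ground_t (\<delta> v))"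

definition is_solution :: "('v \<Rightarrow> ('f, 'v) trm) \<Rightarrow> ('f, 'v) constr \<Rightarrow> bool" where
  "is_solution \<delta> \<pi> \<longleftrightarrow> (\<forall>(t, s) \<in> set \<pi>. \<not> (\<exists>\<tau>. tsubst \<tau> s = tsubst \<delta> t))"

fun sat_ground :: "('p, 'f, 'v) atom set \<Rightarrow> ('p, 'f, 'v) clause \<Rightarrow> bool" where
  "sat_ground I (\<Gamma>, \<Delta>) \<longleftrightarrow> (\<exists>A \<in># \<Delta>. A \<in> I) \<or> \<not> set_mset \<Gamma> \<subseteq> I"

fun sat_cc :: "('p, 'f, 'v) atom set \<Rightarrow> ('p, 'f, 'v) cclause \<Rightarrow> bool" where
  "sat_cc I (C, \<pi>) \<longleftrightarrow>
     (\<forall>\<delta>. grounding_on \<delta> (vars_cl C \<union> vars_lhs \<pi>) \<and> is_solution \<delta> \<pi>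
           \<longrightarrow> sat_ground I (csubst \<delta> C))"

definition satisfiable :: "('p, 'f, 'v) cclause set \<Rightarrow> bool" where
  "satisfiable N \<longleftrightarrow> (\<exists>I. (\<forall>A \<in> I. ground_a A) \<and> (\<forall>C \<in> N. sat_cc I C))"

fun proj_a :: "'p \<Rightarrow> ('p \<times> nat \<Rightarrow> 'f) \<Rightarrow> 'p \<times> nat \<Rightarrow> ('p, 'f, 'v) atom \<Rightarrow> ('p, 'f, 'v) atom" where
  "proj_a T fP P (Atom p ts) =
     (if (p, length ts) = P then Atom T [Fun (fP P) ts] else Atom p ts)"

fun proj_cc :: "'p \<Rightarrow> ('p \<times> nat \<Rightarrow> 'f) \<Rightarrow> 'p \<times> nat \<Rightarrow> ('p, 'f, 'v) cclause \<Rightarrow> ('p, 'f, 'v) cclause" where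
  "proj_cc T fP P ((\<Gamma>, \<Delta>), \<pi>) =
     ((image_mset (proj_a T fP P) \<Gamma>, image_mset (proj_a T fP P) \<Delta>), \<pi>)"

definition MO_step :: "'p \<Rightarrow> ('p \<times> nat \<Rightarrow> 'f) \<Rightarrow> ('p, 'f, 'v) cclause set \<Rightarrow> ('p, 'f, 'v) cclause set \<Rightarrow> bool" where
  "MO_step T fP N N' \<longleftrightarrow>
     (\<exists>P \<in> preds N. snd P \<noteq> 1 \<and> N' = proj_cc T fP P ` N)"

definition SH_step :: "'p \<Rightarrow> ('p, 'f, 'v) cclause set \<Rightarrow> ('p, 'f, 'v) cclause set \<Rightarrow> bool" where
  "SH_step T N N' \<longleftrightarrow>
     (\<exists>\<Gamma> \<Delta> E p s \<pi> x S \<Gamma>l \<Delta>l \<Gamma>r \<Delta>r.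
        ((\<Gamma>, add_mset E \<Delta>), \<pi>) \<in> N \<and>
        atom_at E p = Some s \<and> (\<exists>f ts. s = Fun f ts) \<and> length p = 2 \<and>
        x \<notin> vars_cc ((\<Gamma>, add_mset E \<Delta>), \<pi>) \<and>
        (S, 1) \<notin> preds N \<and> S \<noteq> T \<and>
        image_mset (asubst (Var(x := s))) \<Gamma>l \<union># \<Gamma>r = \<Gamma> \<and>
        \<Delta>l \<union># \<Delta>r = \<Delta> \<and>
        (\<forall>Q y. Atom Q [Var y] \<in># \<Gamma> \<and> y \<in> vars_a (atom_replace E p (Var x)) \<union> vars_ms \<Delta>l
            \<longrightarrow> Atom Q [Var y] \<in># \<Gamma>l) \<and>
        (\<forall>Q y. Atom Q [Var y] \<in># \<Gamma> \<and> y \<in> vars_t s \<union> vars_ms \<Delta>r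
            \<longrightarrow> Atom Q [Var y] \<in># \<Gamma>r) \<and>
        N' = (N - {((\<Gamma>, add_mset E \<Delta>), \<pi>)}) \<union>
             {((add_mset (Atom S [Var x]) \<Gamma>l, add_mset (atom_replace E p (Var x)) \<Delta>l), \<pi>),
              ((\<Gamma>r, add_mset (Atom S [s]) \<Delta>r), \<pi>)})"

definition LI1_step :: "('p, 'f, 'v) cclause set \<Rightarrow> ('p, 'f, 'v) cclause set \<Rightarrow> bool" where
  "LI1_step N N' \<longleftrightarrow>
     (\<exists>\<Gamma> \<Delta> E' E p q x x' \<pi>.
        ((\<Gamma>, \<Delta> + {#E', E#}), \<pi>) \<in> N \<and>
        atom_at E' p = Some (Var x) \<and> atom_at E q = Some (Var x) \<and>
        x' \<notin> vars_cc ((\<Gamma>, \<Delta> + {#E', E#}), \<pi>) \<and>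
        N' = (N - {((\<Gamma>, \<Delta> + {#E', E#}), \<pi>)}) \<union>
             {((image_mset (asubst (Var(x := Var x'))) \<Gamma> + \<Gamma>,
                \<Delta> + {#E', atom_replace E q (Var x')#}),
               \<pi> @ constr_subst (Var(x := Var x')) \<pi>)})"

definition LI2_step :: "('p, 'f, 'v) cclause set \<Rightarrow> ('p, 'f, 'v) cclause set \<Rightarrow> bool" where
  "LI2_step N N' \<longleftrightarrow>
     (\<exists>\<Gamma> \<Delta> E p q x x' \<pi>.
        ((\<Gamma>, add_mset E \<Delta>), \<pi>) \<in> N \<and>
        atom_at E p = Some (Var x) \<and> atom_at E q = Some (Var x) \<and> p \<noteq> q \<and>
        x' \<notin> vars_cc ((\<Gamma>, add_mset E \<Delta>), \<pi>) \<and>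
        N' = (N - {((\<Gamma>, add_mset E \<Delta>), \<pi>)}) \<union>
             {((image_mset (asubst (Var(x := Var x'))) \<Gamma> + \<Gamma>,
                add_mset (atom_replace E q (Var x')) \<Delta>),
               \<pi> @ constr_subst (Var(x := Var x')) \<pi>)})"

definition Ref_step :: "('p, 'f, 'v) cclause set \<Rightarrow> ('p, 'f, 'v) cclause set \<Rightarrow> bool" where
  "Ref_step N N' \<longleftrightarrow>
     (\<exists>C \<pi> x t.
        (C, \<pi>) \<in> N \<and> x \<in> vars_cl C \<and> straight t \<and>
        vars_t t \<inter> vars_cc (C, \<pi>) = {} \<and>
        N' = (N - {(C, \<pi>)}) \<union>
             {(C, \<pi> @ [(Var x, t)]),
              (csubst (Var(x := t)) C, constr_subst (Var(x := t)) \<pi>)})"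

text \<open>Priority MO > SH > LI among the non-Ref rules; Ref may be applied at any
  time (its finiteness is imposed on sequences in the theorem).\<close>

definition AP_noref_step :: "'p \<Rightarrow> ('p \<times> nat \<Rightarrow> 'f) \<Rightarrow> ('p, 'f, 'v) cclause set \<Rightarrow> ('p, 'f, 'v) cclause set \<Rightarrow> bool" where
  "AP_noref_step T fP N N' \<longleftrightarrow>
     MO_step T fP N N' \<or>
     (SH_step T N N' \<and> \<not> (\<exists>M. MO_step T fP N M)) \<or>
     ((LI1_step N N' \<or> LI2_step N N') \<and> \<not> (\<exists>M. MO_step T fP N M) \<and> \<not> (\<exists>M. SH_step T N M))"

definition AP_step :: "'p \<Rightarrow> ('p \<times> nat \<Rightarrow> 'f) \<Rightarrow> ('p, 'f, 'v) cclause set \<Rightarrow> ('p, 'f, 'v) cclause set \<Rightarrow> bool" where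
  "AP_step T fP N N' \<longleftrightarrow> Ref_step N N' \<or> AP_noref_step T fP N N'"

end

theory Submission
  imports Defs
begin

text \<open>Soundness: each rule replaces a clause by clauses that together entail all its ground
  instances. For MO, a model of the projected set is pulled back along the projection. For SH,
  an instance \<open>\<delta>\<close> of the premise with true body makes \<open>S(s\<delta>)\<close> true by the right conclusion,
  and the left conclusion instantiated by \<open>\<delta>\<close> with \<open>x \<mapsto> s\<delta>\<close> yields its head. For LI, the
  fresh copy \<open>x'\<close> is instantiated like \<open>x\<close>. For Ref, an instance either solves the new
  disequation \<open>x \<noteq> t\<close> or factors through \<open>{x \<mapsto> t}\<close>.

  Termination: Ref is applied only finitely often, and MO, SH and LI each decrease a
  well-founded lexicographic measure on clause sets.\<close>

fun fsize :: "('f, 'v) trm \<Rightarrow> nat" where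
  "fsize (Var x) = 0"
| "fsize (Fun f ts) = Suc (sum_list (map fsize ts))"

fun occs :: "'v \<Rightarrow> ('f, 'v) trm \<Rightarrow> nat" where
  "occs v (Var y) = (if v = y then 1 else 0)"
| "occs v (Fun f ts) = sum_list (map (occs v) ts)"

lemma sum_list_update_add:
  "i < length xs \<Longrightarrow> sum_list (xs[i := a]) + xs ! i = sum_list xs + (a :: nat)"
  using elem_le_sum_list[of i xs] by (simp add: sum_list_update trans_le_add1)

lemma replace_at_additive:
  assumes w_Fun: "\<And>f ts. w (Fun f ts) = c f + sum_list (map w ts)"
  shows "term_at t q = Some u \<Longrightarrow> w (replace_at t q s) + w u = w t + (w s :: nat)"
proof (induction t arbitrary: q)
  case (Var x)
  then show ?case by (cases q) auto
next
  case (Fun f ts)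
  show ?case
  proof (cases q)
    case Nil
    then show ?thesis using Fun.prems by auto
  next
    case (Cons i q')
    with Fun.prems have i: "i < length ts" and u: "term_at (ts ! i) q' = Some u"
      by (auto split: if_splits)
    have "w (replace_at (ts ! i) q' s) + w u = w (ts ! i) + w s"
      using Fun.IH[OF nth_mem[OF i] u] .
    moreover have "sum_list ((map w ts)[i := w (replace_at (ts ! i) q' s)]) + map w ts ! i
        = sum_list (map w ts) + w (replace_at (ts ! i) q' s)"
      using i by (intro sum_list_update_add) simp
    ultimately show ?thesis using Cons i by (simp add: w_Fun map_update)
  qed
qed

lemma fsize_replace_at:
  "term_at t q = Some u \<Longrightarrow> fsize (replace_at t q s) + fsize u = fsize t + fsize s"
  by (rule replace_at_additive[where c = "\<lambda>_. 1"]) simp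

lemma occs_replace_at:
  "term_at t q = Some u \<Longrightarrow> occs v (replace_at t q s) + occs v u = occs v t + occs v s"
  by (rule replace_at_additive[where c = "\<lambda>_. 0"]) simp

lemma occs_term_at_le: "term_at t q = Some u \<Longrightarrow> occs v u \<le> occs v t"
  using occs_replace_at[of t q u v "Fun undefined []"] by simp

lemma nth_add_nth_le_sum_list:
  "i < length xs \<Longrightarrow> j < length xs \<Longrightarrow> i \<noteq> j \<Longrightarrow> xs ! i + xs ! j \<le> sum_list (xs :: nat list)"
proof -
  assume ij: "i < length xs" "j < length xs" "i \<noteq> j"
  have "xs ! i + xs ! j = (\<Sum>k\<in>{i, j}. xs ! k)" using ij by simp
  also have "\<dots> \<le> (\<Sum>k<length xs. xs ! k)" using ij by (intro sum_mono2) auto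
  also have "\<dots> = sum_list xs" by (simp add: sum_list_sum_nth atLeast0LessThan)
  finally show ?thesis .
qed

lemma two_le_occs:
  "term_at t p = Some (Var x) \<Longrightarrow> term_at t q = Some (Var x) \<Longrightarrow> p \<noteq> q \<Longrightarrow> 2 \<le> occs x t"
proof (induction t arbitrary: p q)
  case (Var y)
  then show ?case by (cases p; cases q) auto
next
  case (Fun f ts)
  obtain i p' where p: "p = i # p'" using Fun.prems by (cases p) auto
  obtain j q' where q: "q = j # q'" using Fun.prems by (cases q) auto
  have i: "i < length ts" and tp: "term_at (ts ! i) p' = Some (Var x)"
    using Fun.prems p by (auto split: if_splits)
  have j: "j < length ts" and tq: "term_at (ts ! j) q' = Some (Var x)"
    using Fun.prems q by (auto split: if_splits)
  show ?case
  proof (cases "i = j")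
    case True
    then have "2 \<le> occs x (ts ! i)"
      using Fun.IH[OF nth_mem[OF i] tp] tq p q Fun.prems(3) by auto
    moreover have "occs x (ts ! i) \<le> sum_list (map (occs x) ts)"
      using i by (metis elem_le_sum_list length_map nth_map)
    ultimately show ?thesis by simp
  next
    case False
    have "map (occs x) ts ! i + map (occs x) ts ! j \<le> sum_list (map (occs x) ts)"
      using i j False by (intro nth_add_nth_le_sum_list) auto
    moreover have "1 \<le> occs x (ts ! i)" "1 \<le> occs x (ts ! j)"
      using occs_term_at_le[OF tp, of x] occs_term_at_le[OF tq, of x] by simp_all
    ultimately show ?thesis using i j by simp
  qed
qed

lemma tsubst_cong: "(\<And>v. v \<in> vars_t t \<Longrightarrow> \<sigma> v = \<tau> v) \<Longrightarrow> tsubst \<sigma> t = tsubst \<tau> t"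
  by (induction t) auto

lemma asubst_cong: "(\<And>v. v \<in> vars_a A \<Longrightarrow> \<sigma> v = \<tau> v) \<Longrightarrow> asubst \<sigma> A = asubst \<tau> A"
  by (cases A) (auto intro: tsubst_cong)

lemma csubst_cong: "(\<And>v. v \<in> vars_cl C \<Longrightarrow> \<sigma> v = \<tau> v) \<Longrightarrow> csubst \<sigma> C = csubst \<tau> C"
  by (cases C) (auto simp: vars_ms_def intro!: image_mset_cong asubst_cong)

lemma tsubst_upd_fresh: "x \<notin> vars_t t \<Longrightarrow> tsubst (\<sigma>(x := u)) t = tsubst \<sigma> t"
  by (rule tsubst_cong) auto

lemma asubst_upd_fresh: "x \<notin> vars_a A \<Longrightarrow> asubst (\<sigma>(x := u)) A = asubst \<sigma> A"
  by (rule asubst_cong) auto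

lemma tsubst_tsubst: "tsubst \<sigma> (tsubst \<tau> t) = tsubst (\<lambda>v. tsubst \<sigma> (\<tau> v)) t"
  by (induction t) auto

lemma asubst_asubst: "asubst \<sigma> (asubst \<tau> A) = asubst (\<lambda>v. tsubst \<sigma> (\<tau> v)) A"
  by (cases A) (auto simp: tsubst_tsubst)

lemma csubst_csubst: "csubst \<sigma> (csubst \<tau> C) = csubst (\<lambda>v. tsubst \<sigma> (\<tau> v)) C"
  by (cases C) (simp add: asubst_asubst multiset.map_comp o_def)

lemma vars_tsubst: "vars_t (tsubst \<sigma> t) = (\<Union>v\<in>vars_t t. vars_t (\<sigma> v))"
  by (induction t) auto

lemma vars_asubst: "vars_a (asubst \<sigma> A) = (\<Union>v\<in>vars_a A. vars_t (\<sigma> v))"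
  by (cases A) (auto simp: vars_tsubst)

lemma vars_ms_image_asubst: "vars_ms (image_mset (asubst \<sigma>) M) = (\<Union>v\<in>vars_ms M. vars_t (\<sigma> v))"
  by (auto simp: vars_ms_def vars_asubst)

lemma vars_cl_csubst: "vars_cl (csubst \<sigma> C) = (\<Union>v\<in>vars_cl C. vars_t (\<sigma> v))"
  by (cases C) (auto simp: vars_ms_image_asubst)

lemma vars_a_subset_asubst_upd: "vars_a A \<subseteq> vars_a (asubst (Var(x := s)) A) \<union> {x}"
  by (auto simp: vars_asubst)

lemma ground_tsubst_iff: "ground_t (tsubst \<delta> t) \<longleftrightarrow> (\<forall>v\<in>vars_t t. ground_t (\<delta> v))"
  by (auto simp: ground_t_def vars_tsubst)

lemma grounding_on_mono: "grounding_on \<delta> V \<Longrightarrow> W \<subseteq> V \<Longrightarrow> grounding_on \<delta> W"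
  by (auto simp: grounding_on_def)

lemma grounding_on_upd:
  "grounding_on \<delta> V \<Longrightarrow> ground_t t \<Longrightarrow> W \<subseteq> V \<union> {x} \<Longrightarrow> grounding_on (\<delta>(x := t)) W"
  by (auto simp: grounding_on_def)

lemma grounding_on_tsubst:
  assumes "\<forall>v\<in>V. tsubst \<delta>' (\<sigma> v) = \<delta> v" "grounding_on \<delta> V"
  shows "grounding_on \<delta>' (\<Union>v\<in>V. vars_t (\<sigma> v))"
  using assms unfolding grounding_on_def by (metis UN_E ground_tsubst_iff)

lemma ground_asubst: "grounding_on \<delta> V \<Longrightarrow> vars_a A \<subseteq> V \<Longrightarrow> ground_a (asubst \<delta> A)"
  by (auto simp: ground_a_def vars_asubst grounding_on_def ground_t_def)

lemma vars_lhs_constr_subst: "vars_lhs (constr_subst \<sigma> \<pi>) = (\<Union>v\<in>vars_lhs \<pi>. vars_t (\<sigma> v))"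
  unfolding vars_lhs_def constr_subst_def by (force simp: vars_tsubst split: prod.splits)

lemma vars_lhs_subset_vars_constr: "vars_lhs \<pi> \<subseteq> vars_constr \<pi>"
  by (auto simp: vars_lhs_def vars_constr_def)

lemma vars_lhs_append: "vars_lhs (\<pi> @ \<rho>) = vars_lhs \<pi> \<union> vars_lhs \<rho>"
  by (auto simp: vars_lhs_def)

lemma is_solution_append: "is_solution \<delta> (\<pi> @ \<rho>) \<longleftrightarrow> is_solution \<delta> \<pi> \<and> is_solution \<delta> \<rho>"
  by (auto simp: is_solution_def)

lemma is_solution_constr_subst:
  assumes "is_solution \<delta> \<pi>" "\<forall>v\<in>vars_lhs \<pi>. tsubst \<delta>' (\<sigma> v) = \<delta> v"
  shows "is_solution \<delta>' (constr_subst \<sigma> \<pi>)"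
proof -
  have "tsubst \<delta>' (tsubst \<sigma> t) = tsubst \<delta> t" if "(t, s) \<in> set \<pi>" for t s
    unfolding tsubst_tsubst using assms(2) that by (intro tsubst_cong) (auto simp: vars_lhs_def)
  then show ?thesis using assms(1) by (fastforce simp: is_solution_def constr_subst_def)
qed

lemma is_solution_upd_fresh:
  assumes "is_solution \<delta> \<pi>" "x \<notin> vars_lhs \<pi>"
  shows "is_solution (\<delta>(x := u)) \<pi>"
proof -
  have "tsubst (\<delta>(x := u)) t = tsubst \<delta> t" if "(t, s) \<in> set \<pi>" for t s
    using assms(2) that by (intro tsubst_upd_fresh) (auto simp: vars_lhs_def)
  then show ?thesis using assms(1) by (fastforce simp: is_solution_def)
qed

lemma vars_term_at: "term_at t q = Some u \<Longrightarrow> vars_t u \<subseteq> vars_t t"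
  by (induction t q rule: term_at.induct) (auto split: if_splits dest!: nth_mem)

lemma vars_atom_at: "atom_at E q = Some u \<Longrightarrow> vars_t u \<subseteq> vars_a E"
  by (induction E q rule: atom_at.induct) (auto split: if_splits dest!: vars_term_at nth_mem)

lemma vars_list_update:
  "vars_t r \<subseteq> vars_t (ts ! i) \<union> V \<Longrightarrow>
   \<Union> (set (map vars_t (ts[i := r]))) \<subseteq> \<Union> (set (map vars_t ts)) \<union> V"
proof (cases "i < length ts")
  case True
  assume "vars_t r \<subseteq> vars_t (ts ! i) \<union> V"
  moreover have "set (ts[i := r]) \<subseteq> insert r (set ts)" by (rule set_update_subset_insert)
  moreover have "ts ! i \<in> set ts" using True by simp
  ultimately show ?thesis by fastforce
qed (simp add: list_update_beyond)

lemma vars_replace_at: "vars_t (replace_at t q s) \<subseteq> vars_t t \<union> vars_t s"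
proof (induction t q s rule: replace_at.induct)
  case (3 f ts i p s)
  then show ?case using vars_list_update[of "replace_at (ts ! i) p s" ts i "vars_t s"] by simp
qed auto

lemma vars_atom_replace: "vars_a (atom_replace E q s) \<subseteq> vars_a E \<union> vars_t s"
proof (cases "(E, q, s)" rule: atom_replace.cases)
  case (2 P ts i p s)
  then show ?thesis
    using vars_list_update[OF vars_replace_at[of "ts ! i" p s]] by simp
qed auto

lemma tsubst_replace_at:
  "term_at t q = Some u \<Longrightarrow> tsubst \<delta> s = tsubst \<delta> u \<Longrightarrow> tsubst \<delta> (replace_at t q s) = tsubst \<delta> t"
proof (induction t q s rule: replace_at.induct)
  case (3 f ts i p s)
  then have "i < length ts" "tsubst \<delta> (replace_at (ts ! i) p s) = tsubst \<delta> (ts ! i)"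
    by (auto split: if_splits)
  then show ?case by (simp add: map_update) (metis length_map list_update_id nth_map)
qed auto

lemma asubst_atom_replace:
  "atom_at E q = Some u \<Longrightarrow> tsubst \<delta> s = tsubst \<delta> u \<Longrightarrow> asubst \<delta> (atom_replace E q s) = asubst \<delta> E"
proof (induction E q rule: atom_at.induct)
  case (2 P ts i p)
  then have "i < length ts" "tsubst \<delta> (replace_at (ts ! i) p s) = tsubst \<delta> (ts ! i)"
    by (auto split: if_splits intro: tsubst_replace_at)
  then show ?case by (simp add: map_update) (metis length_map list_update_id nth_map)
qed auto

section \<open>Soundness of the individual rules\<close>

lemma Ref_sound:
  assumes neg: "sat_cc I (C, \<pi> @ [(Var x, t)])"
    and inst: "sat_cc I (csubst (Var(x := t)) C, constr_subst (Var(x := t)) \<pi>)"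
    and x: "x \<in> vars_cl C" and t_fresh: "vars_t t \<inter> vars_cc (C, \<pi>) = {}"
  shows "sat_cc I (C, \<pi>)"
  unfolding sat_cc.simps
proof (intro allI impI, elim conjE)
  fix \<delta> assume g: "grounding_on \<delta> (vars_cl C \<union> vars_lhs \<pi>)" and sol: "is_solution \<delta> \<pi>"
  show "sat_ground I (csubst \<delta> C)"
  proof (cases "\<exists>\<tau>. tsubst \<tau> t = \<delta> x")
    case False
    then have "is_solution \<delta> (\<pi> @ [(Var x, t)])"
      using sol by (auto simp: is_solution_append is_solution_def)
    moreover have "grounding_on \<delta> (vars_cl C \<union> vars_lhs (\<pi> @ [(Var x, t)]))"
      using g x by (auto simp: vars_lhs_append grounding_on_def vars_lhs_def)
    ultimately show ?thesis using neg by simp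
  next
    case True
    then obtain \<tau> where \<tau>: "tsubst \<tau> t = \<delta> x" by blast
    define \<sigma> where "\<sigma> = Var(x := t)"
    \<comment> \<open>\<open>\<delta>\<close> factors through \<open>\<sigma>\<close>, because the variables of \<open>t\<close> are fresh.\<close>
    define \<delta>' where "\<delta>' = (\<lambda>v. if v \<in> vars_t t then \<tau> v else \<delta> v)"
    have factor: "\<forall>v\<in>vars_cl C \<union> vars_lhs \<pi>. tsubst \<delta>' (\<sigma> v) = \<delta> v"
    proof
      fix v assume v: "v \<in> vars_cl C \<union> vars_lhs \<pi>"
      show "tsubst \<delta>' (\<sigma> v) = \<delta> v"
      proof (cases "v = x")
        case True
        have "tsubst \<delta>' t = tsubst \<tau> t" by (intro tsubst_cong) (auto simp: \<delta>'_def)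
        then show ?thesis using True \<tau> by (simp add: \<sigma>_def)
      next
        case False
        have "v \<notin> vars_t t" using v t_fresh vars_lhs_subset_vars_constr[of \<pi>] by auto
        then show ?thesis using False by (simp add: \<sigma>_def \<delta>'_def)
      qed
    qed
    have "grounding_on \<delta>' (vars_cl (csubst \<sigma> C) \<union> vars_lhs (constr_subst \<sigma> \<pi>))"
      using grounding_on_tsubst[OF factor g] by (simp add: vars_cl_csubst vars_lhs_constr_subst UN_Un)
    moreover have "is_solution \<delta>' (constr_subst \<sigma> \<pi>)"
      using is_solution_constr_subst[OF sol] factor by auto
    ultimately have "sat_ground I (csubst \<delta>' (csubst \<sigma> C))" using inst by (simp add: \<sigma>_def)
    moreover have "csubst \<delta>' (csubst \<sigma> C) = csubst \<delta> C"
      unfolding csubst_csubst using factor by (intro csubst_cong) auto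
    ultimately show ?thesis by simp
  qed
qed

lemma MO_sound:
  assumes "sat_cc I (proj_cc T fP P D)"
  shows "sat_cc {A. ground_a A \<and> proj_a T fP P A \<in> I} D"
proof -
  obtain \<Gamma> \<Delta> \<pi> where D: "D = ((\<Gamma>, \<Delta>), \<pi>)" by (metis prod.collapse)
  have vars_proj_a: "vars_a (proj_a T fP P A) = vars_a A" for A
    by (cases A) auto
  have vars_proj: "vars_ms (image_mset (proj_a T fP P) M) = vars_ms M" for M
    by (simp add: vars_ms_def vars_proj_a)
  have proj_asubst: "asubst \<delta> (proj_a T fP P A) = proj_a T fP P (asubst \<delta> A)" for \<delta> A
    by (cases A) auto
  show ?thesis unfolding D sat_cc.simps
  proof (intro allI impI, elim conjE)
    fix \<delta> assume g: "grounding_on \<delta> (vars_cl (\<Gamma>, \<Delta>) \<union> vars_lhs \<pi>)" and sol: "is_solution \<delta> \<pi>"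
    have "sat_ground I (csubst \<delta> (image_mset (proj_a T fP P) \<Gamma>, image_mset (proj_a T fP P) \<Delta>))"
      using assms g sol by (simp add: D vars_proj)
    moreover have "ground_a (asubst \<delta> A)" if "A \<in># \<Gamma> + \<Delta>" for A
      using that g by (intro ground_asubst) (auto simp: vars_ms_def)
    ultimately show "sat_ground {A. ground_a A \<and> proj_a T fP P A \<in> I} (csubst \<delta> (\<Gamma>, \<Delta>))"
      by (auto simp: proj_asubst)
  qed
qed

lemma vars_SH_left_conclusion:
  assumes "image_mset (asubst (Var(x := s))) \<Gamma>l \<union># \<Gamma>r = \<Gamma>" "\<Delta>l \<union># \<Delta>r = \<Delta>"
  shows "vars_cl (add_mset (Atom S [Var x]) \<Gamma>l, add_mset (atom_replace E p (Var x)) \<Delta>l)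
    \<subseteq> vars_cl (\<Gamma>, add_mset E \<Delta>) \<union> {x}"
proof -
  have "vars_a A \<subseteq> vars_ms \<Gamma> \<union> {x}" if "A \<in># \<Gamma>l" for A
  proof -
    have "asubst (Var(x := s)) A \<in># \<Gamma>" using assms(1) that by auto
    then show ?thesis using vars_a_subset_asubst_upd[of A x s] by (auto simp: vars_ms_def)
  qed
  moreover have "set_mset \<Delta>l \<subseteq> set_mset \<Delta>" using assms(2) by auto
  ultimately show ?thesis using vars_atom_replace[of E p "Var x"] by (auto simp: vars_ms_def)
qed

lemma SH_sound:
  assumes left: "sat_cc I ((add_mset (Atom S [Var x]) \<Gamma>l, add_mset (atom_replace E p (Var x)) \<Delta>l), \<pi>)"
    and right: "sat_cc I ((\<Gamma>r, add_mset (Atom S [s]) \<Delta>r), \<pi>)"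
    and at: "atom_at E p = Some s"
    and x_fresh: "x \<notin> vars_cc ((\<Gamma>, add_mset E \<Delta>), \<pi>)"
    and \<Gamma>_split: "image_mset (asubst (Var(x := s))) \<Gamma>l \<union># \<Gamma>r = \<Gamma>"
    and \<Delta>_split: "\<Delta>l \<union># \<Delta>r = \<Delta>"
  shows "sat_cc I ((\<Gamma>, add_mset E \<Delta>), \<pi>)"
  unfolding sat_cc.simps
proof (intro allI impI, elim conjE)
  fix \<delta> assume g: "grounding_on \<delta> (vars_cl (\<Gamma>, add_mset E \<Delta>) \<union> vars_lhs \<pi>)"
    and sol: "is_solution \<delta> \<pi>"
  have s_vars: "vars_t s \<subseteq> vars_a E" using vars_atom_at[OF at] .
  have \<Gamma>l: "asubst (Var(x := s)) A \<in># \<Gamma>" if "A \<in># \<Gamma>l" for A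
    using \<Gamma>_split that by auto
  have \<Gamma>r: "set_mset \<Gamma>r \<subseteq> set_mset \<Gamma>" and \<Delta>l: "set_mset \<Delta>l \<subseteq> set_mset \<Delta>"
    and \<Delta>r: "set_mset \<Delta>r \<subseteq> set_mset \<Delta>"
    using \<Gamma>_split \<Delta>_split by auto
  have x: "x \<notin> vars_a E" "x \<notin> vars_ms \<Delta>" "x \<notin> vars_lhs \<pi>"
    using x_fresh vars_lhs_subset_vars_constr[of \<pi>] by (auto simp: vars_ms_def)
  show "sat_ground I (csubst \<delta> (\<Gamma>, add_mset E \<Delta>))"
  proof (rule ccontr)
    assume "\<not> ?thesis"
    then have \<Gamma>I: "asubst \<delta> ` set_mset \<Gamma> \<subseteq> I" and EI: "asubst \<delta> E \<notin> I"
      and \<Delta>I: "\<forall>A\<in>#\<Delta>. asubst \<delta> A \<notin> I"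
      by auto
    have "grounding_on \<delta> (vars_cl (\<Gamma>r, add_mset (Atom S [s]) \<Delta>r) \<union> vars_lhs \<pi>)"
      using g s_vars \<Gamma>r \<Delta>r by (elim grounding_on_mono) (auto simp: vars_ms_def)
    then have "sat_ground I (csubst \<delta> (\<Gamma>r, add_mset (Atom S [s]) \<Delta>r))"
      using right sol by simp
    then have S_s: "Atom S [tsubst \<delta> s] \<in> I"
      using \<Gamma>I \<Delta>I \<Gamma>r \<Delta>r by auto
    define \<delta>' where "\<delta>' = \<delta>(x := tsubst \<delta> s)"
    have "vars_cl (add_mset (Atom S [Var x]) \<Gamma>l, add_mset (atom_replace E p (Var x)) \<Delta>l)
        \<union> vars_lhs \<pi> \<subseteq> vars_cl (\<Gamma>, add_mset E \<Delta>) \<union> vars_lhs \<pi> \<union> {x}"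
      using vars_SH_left_conclusion[OF \<Gamma>_split \<Delta>_split] by blast
    moreover have "ground_t (tsubst \<delta> s)"
      using g s_vars by (auto simp: ground_tsubst_iff grounding_on_def vars_ms_def)
    ultimately have "grounding_on \<delta>'
        (vars_cl (add_mset (Atom S [Var x]) \<Gamma>l, add_mset (atom_replace E p (Var x)) \<Delta>l) \<union> vars_lhs \<pi>)"
      using g unfolding \<delta>'_def by (intro grounding_on_upd)
    moreover have "is_solution \<delta>' \<pi>"
      unfolding \<delta>'_def using sol x(3) by (rule is_solution_upd_fresh)
    ultimately have "sat_ground I
        (csubst \<delta>' (add_mset (Atom S [Var x]) \<Gamma>l, add_mset (atom_replace E p (Var x)) \<Delta>l))"
      using left by simp
    moreover have "asubst \<delta>' ` set_mset \<Gamma>l \<subseteq> I"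
    proof -
      have "asubst \<delta>' A = asubst \<delta> (asubst (Var(x := s)) A)" for A
        unfolding asubst_asubst \<delta>'_def by (intro asubst_cong) auto
      then show ?thesis using \<Gamma>I \<Gamma>l by fastforce
    qed
    moreover have "asubst \<delta>' (atom_replace E p (Var x)) = asubst \<delta> E"
    proof -
      have "tsubst \<delta>' s = tsubst \<delta> s"
        using x(1) s_vars unfolding \<delta>'_def by (intro tsubst_upd_fresh) auto
      then have "asubst \<delta>' (atom_replace E p (Var x)) = asubst \<delta>' E"
        by (intro asubst_atom_replace[OF at]) (simp add: \<delta>'_def)
      also have "\<dots> = asubst \<delta> E"
        unfolding \<delta>'_def using x(1) by (rule asubst_upd_fresh)
      finally show ?thesis .
    qed
    moreover have "asubst \<delta>' A = asubst \<delta> A" if "A \<in># \<Delta>l" for A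
      unfolding \<delta>'_def using x(2) \<Delta>l that by (intro asubst_upd_fresh) (auto simp: vars_ms_def)
    ultimately show False
      using EI \<Delta>I \<Delta>l S_s by (auto simp: \<delta>'_def)
  qed
qed

lemma LI_sound:
  fixes E :: "('p, 'f, 'v) atom"
  assumes renamed: "sat_cc I ((image_mset (asubst (Var(x := Var x'))) \<Gamma> + \<Gamma>,
        add_mset (atom_replace E q (Var x')) \<Delta>), \<pi> @ constr_subst (Var(x := Var x')) \<pi>)"
    and at: "atom_at E q = Some (Var x)"
    and x'_fresh: "x' \<notin> vars_cc ((\<Gamma>, add_mset E \<Delta>), \<pi>)"
  shows "sat_cc I ((\<Gamma>, add_mset E \<Delta>), \<pi>)"
  unfolding sat_cc.simps
proof (intro allI impI, elim conjE)
  fix \<delta> assume g: "grounding_on \<delta> (vars_cl (\<Gamma>, add_mset E \<Delta>) \<union> vars_lhs \<pi>)"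
    and sol: "is_solution \<delta> \<pi>"
  define \<sigma> :: "'v \<Rightarrow> ('f, 'v) trm" where "\<sigma> = Var(x := Var x')"
  define \<delta>' where "\<delta>' = \<delta>(x' := \<delta> x)"
  have x_E: "x \<in> vars_a E" using vars_atom_at[OF at] by simp
  have x': "x' \<notin> vars_a E" "x' \<notin> vars_ms \<Delta>" "x' \<notin> vars_ms \<Gamma>" "x' \<notin> vars_lhs \<pi>"
    using x'_fresh vars_lhs_subset_vars_constr[of \<pi>] by (auto simp: vars_ms_def)
  have factor: "tsubst \<delta>' (\<sigma> v) = \<delta> v" if "v \<noteq> x'" for v
    using that by (auto simp: \<sigma>_def \<delta>'_def)
  have "vars_cl (image_mset (asubst \<sigma>) \<Gamma> + \<Gamma>, add_mset (atom_replace E q (Var x')) \<Delta>)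
      \<union> vars_lhs (\<pi> @ constr_subst \<sigma> \<pi>) \<subseteq> vars_cl (\<Gamma>, add_mset E \<Delta>) \<union> vars_lhs \<pi> \<union> {x'}"
    using vars_atom_replace[of E q "Var x'"]
    by (auto simp: vars_ms_def vars_asubst vars_lhs_append vars_lhs_constr_subst \<sigma>_def split: if_splits)
  moreover have "ground_t (\<delta> x)" using g x_E by (auto simp: grounding_on_def vars_ms_def)
  ultimately have "grounding_on \<delta>' (vars_cl (image_mset (asubst \<sigma>) \<Gamma> + \<Gamma>,
      add_mset (atom_replace E q (Var x')) \<Delta>) \<union> vars_lhs (\<pi> @ constr_subst \<sigma> \<pi>))"
    using g unfolding \<delta>'_def by (intro grounding_on_upd)
  moreover have "is_solution \<delta>' (\<pi> @ constr_subst \<sigma> \<pi>)"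
    unfolding is_solution_append
  proof
    show "is_solution \<delta>' \<pi>" unfolding \<delta>'_def using sol x'(4) by (rule is_solution_upd_fresh)
    show "is_solution \<delta>' (constr_subst \<sigma> \<pi>)"
      using x'(4) by (intro is_solution_constr_subst[OF sol] ballI factor) auto
  qed
  ultimately have "sat_ground I
      (csubst \<delta>' (image_mset (asubst \<sigma>) \<Gamma> + \<Gamma>, add_mset (atom_replace E q (Var x')) \<Delta>))"
    using renamed by (simp add: \<sigma>_def)
  moreover have "asubst \<delta>' (asubst \<sigma> A) = asubst \<delta> A" if "A \<in># \<Gamma>" for A
    unfolding asubst_asubst using x'(3) that
    by (intro asubst_cong factor) (auto simp: vars_ms_def)
  moreover have "asubst \<delta>' A = asubst \<delta> A" if "A \<in># \<Gamma> + \<Delta>" for A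
    unfolding \<delta>'_def using x'(2,3) that by (intro asubst_upd_fresh) (auto simp: vars_ms_def)
  moreover have "asubst \<delta>' (atom_replace E q (Var x')) = asubst \<delta> E"
  proof -
    have "asubst \<delta>' (atom_replace E q (Var x')) = asubst \<delta>' E"
      using x_E x'(1) by (intro asubst_atom_replace[OF at]) (auto simp: \<delta>'_def)
    also have "\<dots> = asubst \<delta> E" unfolding \<delta>'_def using x'(1) by (rule asubst_upd_fresh)
    finally show ?thesis .
  qed
  ultimately show "sat_ground I (csubst \<delta> (\<Gamma>, add_mset E \<Delta>))"
    by auto
qed

section \<open>The termination measure\<close>

text \<open>Each argument contributes the number of function symbols strictly below its root
  (variables contribute 0 by truncated subtraction).\<close>

fun nested_fsize :: "('p, 'f, 'v) atom \<Rightarrow> nat" where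
  "nested_fsize (Atom P ts) = sum_list (map (\<lambda>t. fsize t - 1) ts)"

fun occs_atom :: "'v \<Rightarrow> ('p, 'f, 'v) atom \<Rightarrow> nat" where
  "occs_atom v (Atom P ts) = sum_list (map (occs v) ts)"

definition occs_mset :: "'v \<Rightarrow> ('p, 'f, 'v) atom multiset \<Rightarrow> nat" where
  "occs_mset v M = sum_mset (image_mset (occs_atom v) M)"

definition nonlinearity :: "('p, 'f, 'v) atom multiset \<Rightarrow> nat" where
  "nonlinearity M = (\<Sum>v\<in>vars_ms M. occs_mset v M * (occs_mset v M - 1))"

lemma occs_atom_replace:
  "atom_at E q = Some u \<Longrightarrow> occs_atom v (atom_replace E q s) + occs v u = occs_atom v E + occs v s"
proof (induction E q rule: atom_at.induct)
  case (2 P ts i p)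
  then have i: "i < length ts" and u: "term_at (ts ! i) p = Some u" by (auto split: if_splits)
  have "sum_list ((map (occs v) ts)[i := occs v (replace_at (ts ! i) p s)]) + map (occs v) ts ! i
      = sum_list (map (occs v) ts) + occs v (replace_at (ts ! i) p s)"
    using i by (intro sum_list_update_add) simp
  then show ?case using i occs_replace_at[OF u, of v s] by (simp add: map_update)
qed auto

lemma occs_atom_at_le: "atom_at E q = Some u \<Longrightarrow> occs v u \<le> occs_atom v E"
  using occs_atom_replace[of E q u v "Fun undefined []"] by simp

lemma two_le_occs_atom:
  assumes "atom_at E p = Some (Var x)" "atom_at E q = Some (Var x)" "p \<noteq> q"
  shows "2 \<le> occs_atom x E"
proof -
  obtain P ts where E: "E = Atom P ts" by (cases E)
  have "term_at (Fun undefined ts) p = Some (Var x)" "term_at (Fun undefined ts) q = Some (Var x)"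
    using assms(1,2) E by (cases p; simp; cases q; simp)+
  from two_le_occs[OF this assms(3)] show ?thesis using E by simp
qed

lemma nested_fsize_replace_Var:
  "atom_at E q = Some (Var y) \<Longrightarrow> nested_fsize (atom_replace E q (Var z)) = nested_fsize E"
proof (induction E q rule: atom_at.induct)
  case (2 P ts i p)
  then have i: "i < length ts" and y: "term_at (ts ! i) p = Some (Var y)" by (auto split: if_splits)
  have "fsize (replace_at (ts ! i) p (Var z)) = fsize (ts ! i)"
    using fsize_replace_at[OF y, of "Var z"] by simp
  then show ?case using i by (simp add: map_update) (metis (no_types, lifting) list_update_id nth_map)
qed auto

lemma nested_fsize_shallow:
  assumes at: "atom_at E p = Some s" and len: "length p = 2" and s: "s = Fun g us"
  shows "nested_fsize (atom_replace E p (Var x)) < nested_fsize E"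
    and "nested_fsize (Atom S [s]) < nested_fsize E"
proof -
  obtain P ts where E: "E = Atom P ts" by (cases E)
  obtain i j where p: "p = [i, j]"
    using len by (metis One_nat_def Suc_1 length_0_conv length_Suc_conv)
  have i: "i < length ts" and t: "term_at (ts ! i) [j] = Some s" using at E p by (auto split: if_splits)
  define r where "r = replace_at (ts ! i) [j] (Var x)"
  have split: "fsize r + fsize s = fsize (ts ! i)"
    using fsize_replace_at[OF t, of "Var x"] by (simp add: r_def)
  have "1 \<le> fsize r" using t by (cases "ts ! i") (auto simp: r_def)
  moreover have "1 \<le> fsize s" using s by simp
  moreover have "sum_list ((map (\<lambda>t. fsize t - 1) ts)[i := fsize r - 1]) + (fsize (ts ! i) - 1)
      = sum_list (map (\<lambda>t. fsize t - 1) ts) + (fsize r - 1)"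
    using sum_list_update_add[of i "map (\<lambda>t. fsize t - 1) ts" "fsize r - 1"] i by simp
  moreover have "fsize (ts ! i) - 1 \<le> nested_fsize E"
    using i E by (simp add: elem_le_sum_list) (metis elem_le_sum_list length_map nth_map)
  ultimately show "nested_fsize (atom_replace E p (Var x)) < nested_fsize E"
    and "nested_fsize (Atom S [s]) < nested_fsize E"
    using split i by (simp_all add: E p r_def map_update)
qed

lemma occs_mset_eq_0: "v \<notin> vars_ms M \<Longrightarrow> occs_mset v M = 0"
proof -
  have occs_0: "v \<notin> vars_t t \<Longrightarrow> occs v t = 0" for t
    by (induction t) (auto simp: sum_list_eq_0_iff)
  have "v \<notin> vars_a A \<Longrightarrow> occs_atom v A = 0" for A
    by (cases A) (auto simp: sum_list_eq_0_iff occs_0)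
  then show "v \<notin> vars_ms M \<Longrightarrow> occs_mset v M = 0"
    by (auto simp: occs_mset_def vars_ms_def sum_mset_0_iff)
qed

lemma finite_vars_ms: "finite (vars_ms M)"
proof -
  have "finite (vars_t t)" for t :: "('f, 'v) trm" by (induction t) auto
  then have "finite (vars_a A)" for A :: "('p, 'f, 'v) atom" by (cases A) auto
  then show ?thesis by (auto simp: vars_ms_def)
qed

lemma nonlinearity_rename_occurrence:
  assumes at: "atom_at E q = Some (Var x)"
    and x': "x' \<notin> vars_ms (add_mset E \<Delta>)"
    and two: "2 \<le> occs_mset x (add_mset E \<Delta>)"
  shows "nonlinearity (add_mset (atom_replace E q (Var x')) \<Delta>) < nonlinearity (add_mset E \<Delta>)"
proof -
  define M where "M = add_mset E \<Delta>"
  define M' where "M' = add_mset (atom_replace E q (Var x')) \<Delta>"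
  define g :: "nat \<Rightarrow> nat" where "g c = c * (c - 1)" for c
  define V where "V = vars_ms M \<union> {x'}"
  have fin: "finite V" by (simp add: V_def finite_vars_ms)
  have x_E: "x \<in> vars_a E" using vars_atom_at[OF at] by simp
  have xx': "x \<noteq> x'" using x' x_E by (auto simp: vars_ms_def)
  have occs: "occs_mset v M' + occs v (Var x) = occs_mset v M + occs v (Var x')" for v
    using occs_atom_replace[OF at, of v "Var x'"] by (simp add: occs_mset_def M_def M'_def)
  have "vars_ms M' \<subseteq> V"
    using vars_atom_replace[of E q "Var x'"] by (auto simp: V_def M_def M'_def vars_ms_def)
  then have "nonlinearity M' = (\<Sum>v\<in>V. g (occs_mset v M'))"
    unfolding nonlinearity_def g_def using fin by (intro sum.mono_neutral_left) (auto simp: occs_mset_eq_0)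
  moreover have "nonlinearity M = (\<Sum>v\<in>V. g (occs_mset v M))"
    unfolding nonlinearity_def g_def using fin
    by (intro sum.mono_neutral_left) (auto simp: occs_mset_eq_0 V_def)
  moreover have "(\<Sum>v\<in>V. g (occs_mset v M')) < (\<Sum>v\<in>V. g (occs_mset v M))"
  proof (rule sum_strict_mono_ex1[OF fin])
    show "\<forall>v\<in>V. g (occs_mset v M') \<le> g (occs_mset v M)"
    proof
      fix v assume "v \<in> V"
      show "g (occs_mset v M') \<le> g (occs_mset v M)"
      proof (cases "v = x'")
        case True
        then have "occs_mset v M' = 1"
          using occs[of v] occs_mset_eq_0[of x' M] x' xx' by (simp add: M_def)
        then show ?thesis by (simp add: g_def)
      next
        case False
        then have "occs_mset v M' \<le> occs_mset v M" using occs[of v] by simp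
        then show ?thesis unfolding g_def by (simp add: mult_le_mono diff_le_mono)
      qed
    qed
    have "occs_mset x M = Suc (occs_mset x M')" "1 \<le> occs_mset x M'"
      using occs[of x] xx' two by (simp_all add: M_def)
    then have "g (occs_mset x M') < g (occs_mset x M)"
      unfolding g_def by (cases "occs_mset x M'") simp_all
    moreover have "x \<in> V" using x_E by (simp add: V_def M_def vars_ms_def)
    ultimately show "\<exists>v\<in>V. g (occs_mset v M') < g (occs_mset v M)" by blast
  qed
  ultimately show ?thesis by (simp add: M_def M'_def)
qed

definition clause_measure :: "('p, 'f, 'v) cclause \<Rightarrow> nat multiset \<times> nat" where
  "clause_measure C = (image_mset nested_fsize (snd (fst C)), nonlinearity (snd (fst C)))"

definition clause_order :: "((nat multiset \<times> nat) \<times> (nat multiset \<times> nat)) set" where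
  "clause_order = mult less_than <*lex*> less_than"

definition nonmonadic_preds :: "('p, 'f, 'v) cclause set \<Rightarrow> ('p \<times> nat) set" where
  "nonmonadic_preds N = {P \<in> preds N. snd P \<noteq> 1}"

text \<open>Lexicographic: MO removes a non-monadic predicate; the other rules only add monadic
  ones and replace one clause by smaller ones, SH shrinking a positive literal and LI
  keeping the literal sizes while lowering the nonlinearity.\<close>

definition AP_order :: "(('p, 'f, 'v) cclause set \<times> ('p, 'f, 'v) cclause set) set" where
  "AP_order = inv_image (less_than <*lex*> mult clause_order)
     (\<lambda>N. (card (nonmonadic_preds N), image_mset clause_measure (mset_set N)))"

lemma wf_AP_order: "wf AP_order"
  unfolding AP_order_def clause_order_def
  by (intro wf_inv_image wf_lex_prod wf_less_than wf_mult)

lemma finite_nonmonadic_preds: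
  fixes N :: "('p, 'f, 'v) cclause set"
  assumes "finite N"
  shows "finite (nonmonadic_preds N)"
proof (rule finite_subset)
  show "nonmonadic_preds N \<subseteq> preds N" by (auto simp: nonmonadic_preds_def)
  have "finite (preds_cc C)" for C :: "('p, 'f, 'v) cclause"
    by (cases C rule: preds_cc.cases) auto
  then show "finite (preds N)" using assms by (simp add: preds_def)
qed

lemma add_mset_mult_add_mset:
  assumes "M' \<subseteq># M" "(a, b) \<in> r"
  shows "(add_mset a M', add_mset b M) \<in> mult r"
proof -
  have "add_mset b M = M' + add_mset b (M - M')"
    using assms(1) by (simp add: subset_mset.add_diff_inverse)
  moreover have "add_mset a M' = M' + {#a#}" by simp
  ultimately show ?thesis using assms(2) by (simp only:) (rule one_step_implies_mult; auto)
qed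

lemma replace_clause_decreasing:
  assumes fin: "finite N" and C: "C \<in> N" and fin_Ds: "finite Ds"
    and preds_Ds: "\<forall>D\<in>Ds. preds_cc D \<subseteq> preds_cc C \<union> {P. snd P = 1}"
    and smaller: "\<forall>D\<in>Ds. (clause_measure D, clause_measure C) \<in> clause_order"
  shows "((N - {C}) \<union> Ds, N) \<in> AP_order"
proof -
  define A where "A = N - {C}"
  have fin_A: "finite A" using fin by (simp add: A_def)
  have "nonmonadic_preds ((N - {C}) \<union> Ds) \<subseteq> nonmonadic_preds N"
    using C preds_Ds by (fastforce simp: nonmonadic_preds_def preds_def)
  then have "card (nonmonadic_preds ((N - {C}) \<union> Ds)) \<le> card (nonmonadic_preds N)"
    using finite_nonmonadic_preds[OF fin] by (rule card_mono[rotated])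
  moreover have "mset_set ((N - {C}) \<union> Ds) = mset_set A + mset_set (Ds - A)"
    using fin_A fin_Ds by (subst mset_set_Union[symmetric]) (auto simp: A_def intro: arg_cong[where f = mset_set])
  moreover have "mset_set N = mset_set A + {#C#}"
    using C fin_A by (simp add: A_def mset_set.remove)
  moreover have "(image_mset clause_measure (mset_set A) + image_mset clause_measure (mset_set (Ds - A)),
      image_mset clause_measure (mset_set A) + {#clause_measure C#}) \<in> mult clause_order"
    using smaller fin_Ds by (intro one_step_implies_mult) auto
  ultimately show ?thesis unfolding AP_order_def by (auto simp: le_less)
qed

lemma pred_atom_replace: "pred_a (atom_replace E p s) = pred_a E"
  by (cases "(E, p, s)" rule: atom_replace.cases) auto

lemma pred_asubst: "pred_a (asubst \<sigma> A) = pred_a A"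
  by (cases A) auto

lemma clause_order_shrink_positive:
  assumes "\<Delta>' \<subseteq># \<Delta>" "nested_fsize A' < nested_fsize A"
  shows "(clause_measure ((\<Gamma>', add_mset A' \<Delta>'), \<pi>'), clause_measure ((\<Gamma>, add_mset A \<Delta>), \<pi>))
    \<in> clause_order"
proof -
  have "(add_mset (nested_fsize A') (image_mset nested_fsize \<Delta>'),
      add_mset (nested_fsize A) (image_mset nested_fsize \<Delta>)) \<in> mult less_than"
    using assms by (intro add_mset_mult_add_mset image_mset_subseteq_mono) simp_all
  then show ?thesis by (simp add: clause_measure_def clause_order_def)
qed

lemma preds_SH_conclusions:
  assumes \<Gamma>_split: "image_mset (asubst (Var(x := s))) \<Gamma>l \<union># \<Gamma>r = \<Gamma>"
    and \<Delta>_split: "\<Delta>l \<union># \<Delta>r = \<Delta>"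
  shows "preds_cc ((add_mset (Atom S [Var x]) \<Gamma>l, add_mset (atom_replace E p (Var x)) \<Delta>l), \<pi>)
      \<subseteq> preds_cc ((\<Gamma>, add_mset E \<Delta>), \<pi>') \<union> {P. snd P = 1}"
    and "preds_cc ((\<Gamma>r, add_mset (Atom S [s]) \<Delta>r), \<pi>) \<subseteq> preds_cc ((\<Gamma>, add_mset E \<Delta>), \<pi>') \<union> {P. snd P = 1}"
proof -
  have "pred_a ` set_mset \<Gamma>l \<subseteq> pred_a ` set_mset \<Gamma>"
  proof
    fix P assume "P \<in> pred_a ` set_mset \<Gamma>l"
    then obtain A where A: "A \<in># \<Gamma>l" "P = pred_a A" by auto
    then have "asubst (Var(x := s)) A \<in># \<Gamma>" using \<Gamma>_split by auto
    then show "P \<in> pred_a ` set_mset \<Gamma>" using A(2) by (metis image_eqI pred_asubst)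
  qed
  moreover have "pred_a ` set_mset \<Delta>l \<subseteq> pred_a ` set_mset \<Delta>"
    using \<Delta>_split by (auto intro!: image_mono)
  ultimately show "preds_cc ((add_mset (Atom S [Var x]) \<Gamma>l, add_mset (atom_replace E p (Var x)) \<Delta>l), \<pi>)
      \<subseteq> preds_cc ((\<Gamma>, add_mset E \<Delta>), \<pi>') \<union> {P. snd P = 1}"
    by (simp add: pred_atom_replace image_Un) blast
  have "set_mset \<Gamma>r \<subseteq> set_mset \<Gamma>" "set_mset \<Delta>r \<subseteq> set_mset \<Delta>"
    using \<Gamma>_split \<Delta>_split by auto
  then show "preds_cc ((\<Gamma>r, add_mset (Atom S [s]) \<Delta>r), \<pi>) \<subseteq> preds_cc ((\<Gamma>, add_mset E \<Delta>), \<pi>') \<union> {P. snd P = 1}"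
    by auto
qed

lemma SH_decreasing:
  assumes fin: "finite N" and step: "SH_step T N N'"
  shows "(N', N) \<in> AP_order"
proof -
  from step obtain \<Gamma> \<Delta> E p s \<pi> x S \<Gamma>l \<Delta>l \<Gamma>r \<Delta>r where
    C: "((\<Gamma>, add_mset E \<Delta>), \<pi>) \<in> N" and at: "atom_at E p = Some s"
    and complex: "\<exists>f ts. s = Fun f ts" and len: "length p = 2"
    and \<Gamma>_split: "image_mset (asubst (Var(x := s))) \<Gamma>l \<union># \<Gamma>r = \<Gamma>"
    and \<Delta>_split: "\<Delta>l \<union># \<Delta>r = \<Delta>"
    and N': "N' = (N - {((\<Gamma>, add_mset E \<Delta>), \<pi>)}) \<union>
             {((add_mset (Atom S [Var x]) \<Gamma>l, add_mset (atom_replace E p (Var x)) \<Delta>l), \<pi>),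
              ((\<Gamma>r, add_mset (Atom S [s]) \<Delta>r), \<pi>)}"
    unfolding SH_step_def by blast
  obtain f ts where s: "s = Fun f ts" using complex by blast
  have \<Delta>l: "\<Delta>l \<subseteq># \<Delta>" and \<Delta>r: "\<Delta>r \<subseteq># \<Delta>" using \<Delta>_split by auto
  have "(clause_measure ((add_mset (Atom S [Var x]) \<Gamma>l, add_mset (atom_replace E p (Var x)) \<Delta>l), \<pi>),
      clause_measure ((\<Gamma>, add_mset E \<Delta>), \<pi>)) \<in> clause_order"
    using \<Delta>l nested_fsize_shallow(1)[OF at len s] by (rule clause_order_shrink_positive)
  moreover have "(clause_measure ((\<Gamma>r, add_mset (Atom S [s]) \<Delta>r), \<pi>),
      clause_measure ((\<Gamma>, add_mset E \<Delta>), \<pi>)) \<in> clause_order"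
    using \<Delta>r nested_fsize_shallow(2)[OF at len s] by (rule clause_order_shrink_positive)
  moreover note preds_SH_conclusions[OF \<Gamma>_split \<Delta>_split]
  ultimately show ?thesis unfolding N' using fin C by (intro replace_clause_decreasing) auto
qed

lemma LI_decreasing:
  assumes fin: "finite N" and C: "((\<Gamma>, add_mset E \<Delta>), \<pi>) \<in> N"
    and at: "atom_at E q = Some (Var x)"
    and x': "x' \<notin> vars_cc ((\<Gamma>, add_mset E \<Delta>), \<pi>)"
    and two: "2 \<le> occs_mset x (add_mset E \<Delta>)"
  shows "((N - {((\<Gamma>, add_mset E \<Delta>), \<pi>)}) \<union>
      {((image_mset (asubst (Var(x := Var x'))) \<Gamma> + \<Gamma>, add_mset (atom_replace E q (Var x')) \<Delta>), \<pi>')},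
      N) \<in> AP_order"
proof (rule replace_clause_decreasing[OF fin C])
  have "x' \<notin> vars_ms (add_mset E \<Delta>)" using x' by auto
  then show "\<forall>D\<in>{((image_mset (asubst (Var(x := Var x'))) \<Gamma> + \<Gamma>,
      add_mset (atom_replace E q (Var x')) \<Delta>), \<pi>')}.
      (clause_measure D, clause_measure ((\<Gamma>, add_mset E \<Delta>), \<pi>)) \<in> clause_order"
    using nested_fsize_replace_Var[OF at, of x'] nonlinearity_rename_occurrence[OF at _ two]
    by (simp add: clause_measure_def clause_order_def)
qed (auto simp: pred_atom_replace pred_asubst)

lemma LI1_decreasing:
  assumes fin: "finite N" and step: "LI1_step N N'"
  shows "(N', N) \<in> AP_order"
proof -
  from step obtain \<Gamma> \<Delta> E' E p q x x' \<pi> where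
    C: "((\<Gamma>, \<Delta> + {#E', E#}), \<pi>) \<in> N"
    and at': "atom_at E' p = Some (Var x)" and at: "atom_at E q = Some (Var x)"
    and x': "x' \<notin> vars_cc ((\<Gamma>, \<Delta> + {#E', E#}), \<pi>)"
    and N': "N' = (N - {((\<Gamma>, \<Delta> + {#E', E#}), \<pi>)}) \<union>
             {((image_mset (asubst (Var(x := Var x'))) \<Gamma> + \<Gamma>,
                \<Delta> + {#E', atom_replace E q (Var x')#}),
               \<pi> @ constr_subst (Var(x := Var x')) \<pi>)}"
    unfolding LI1_step_def by blast
  have "2 \<le> occs_mset x (add_mset E (add_mset E' \<Delta>))"
    using occs_atom_at_le[OF at', of x] occs_atom_at_le[OF at, of x] by (simp add: occs_mset_def)
  moreover have "\<Delta> + {#E', E#} = add_mset E (add_mset E' \<Delta>)"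
    and "\<Delta> + {#E', atom_replace E q (Var x')#} = add_mset (atom_replace E q (Var x')) (add_mset E' \<Delta>)"
    by simp_all
  ultimately show ?thesis using C x' unfolding N' by (simp only:) (rule LI_decreasing[OF fin _ at])
qed

lemma LI2_decreasing:
  assumes fin: "finite N" and step: "LI2_step N N'"
  shows "(N', N) \<in> AP_order"
proof -
  from step obtain \<Gamma> \<Delta> E p q x x' \<pi> where
    C: "((\<Gamma>, add_mset E \<Delta>), \<pi>) \<in> N"
    and at': "atom_at E p = Some (Var x)" and at: "atom_at E q = Some (Var x)" and pq: "p \<noteq> q"
    and x': "x' \<notin> vars_cc ((\<Gamma>, add_mset E \<Delta>), \<pi>)"
    and N': "N' = (N - {((\<Gamma>, add_mset E \<Delta>), \<pi>)}) \<union>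
             {((image_mset (asubst (Var(x := Var x'))) \<Gamma> + \<Gamma>,
                add_mset (atom_replace E q (Var x')) \<Delta>),
               \<pi> @ constr_subst (Var(x := Var x')) \<pi>)}"
    unfolding LI2_step_def by blast
  have "2 \<le> occs_mset x (add_mset E \<Delta>)"
    using two_le_occs_atom[OF at' at pq] by (simp add: occs_mset_def)
  then show ?thesis unfolding N' by (rule LI_decreasing[OF fin C at x'])
qed

lemma MO_decreasing:
  assumes fin: "finite N" and step: "MO_step T fP N N'"
  shows "(N', N) \<in> AP_order"
proof -
  from step obtain P where P: "P \<in> preds N" "snd P \<noteq> 1" and N': "N' = proj_cc T fP P ` N"
    unfolding MO_step_def by blast
  have pred_proj: "pred_a (proj_a T fP P A) = (if pred_a A = P then (T, 1) else pred_a A)" for A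
    by (cases A) auto
  have "Q \<in> preds_cc D - {P}" if "Q \<in> preds_cc (proj_cc T fP P D)" "snd Q \<noteq> 1" for Q D
    using that by (cases D rule: preds_cc.cases) (auto simp: pred_proj split: if_splits; metis snd_conv)
  then have "nonmonadic_preds N' \<subseteq> nonmonadic_preds N - {P}"
    unfolding nonmonadic_preds_def preds_def N' by blast
  moreover have "P \<in> nonmonadic_preds N" using P by (simp add: nonmonadic_preds_def)
  ultimately have "card (nonmonadic_preds N') < card (nonmonadic_preds N)"
    using finite_nonmonadic_preds[OF fin] by (intro psubset_card_mono) auto
  then show ?thesis by (simp add: AP_order_def)
qed

lemma AP_noref_step_decreasing:
  assumes "finite N" "AP_noref_step T fP N N'"
  shows "(N', N) \<in> AP_order"
  using assms(2) unfolding AP_noref_step_def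
  by (elim disjE conjE) (simp_all add: MO_decreasing SH_decreasing LI1_decreasing LI2_decreasing assms(1))

lemma AP_step_finite:
  assumes "finite N" "AP_step T fP N N'"
  shows "finite N'"
proof -
  have "Ref_step N N' \<or> MO_step T fP N N' \<or> SH_step T N N' \<or> LI1_step N N' \<or> LI2_step N N'"
    using assms(2) unfolding AP_step_def AP_noref_step_def by blast
  then show ?thesis
    using assms(1)
    unfolding Ref_step_def MO_step_def SH_step_def LI1_step_def LI2_step_def
    by (elim disjE exE bexE conjE) simp_all
qed

lemma model_replace_clause:
  assumes "\<forall>D\<in>N'. sat_cc I D" "N' = (N - {C}) \<union> Ds" "(\<forall>D\<in>Ds. sat_cc I D) \<Longrightarrow> sat_cc I C"
  shows "\<forall>D\<in>N. sat_cc I D"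
  using assms by blast

lemma Ref_step_model:
  assumes "Ref_step N N'" "\<forall>D\<in>N'. sat_cc I D"
  shows "\<forall>D\<in>N. sat_cc I D"
proof -
  from assms(1) obtain C \<pi> x t where x: "x \<in> vars_cl C" and t: "vars_t t \<inter> vars_cc (C, \<pi>) = {}"
    and N': "N' = (N - {(C, \<pi>)}) \<union> {(C, \<pi> @ [(Var x, t)]),
      (csubst (Var(x := t)) C, constr_subst (Var(x := t)) \<pi>)}"
    unfolding Ref_step_def by blast
  show ?thesis by (rule model_replace_clause[OF assms(2) N']) (rule Ref_sound[OF _ _ x t]; blast)
qed

lemma SH_step_model:
  assumes "SH_step T N N'" "\<forall>D\<in>N'. sat_cc I D"
  shows "\<forall>D\<in>N. sat_cc I D"
proof -
  from assms(1) obtain \<Gamma> \<Delta> E p s \<pi> x S \<Gamma>l \<Delta>l \<Gamma>r \<Delta>r where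
    at: "atom_at E p = Some s" and x: "x \<notin> vars_cc ((\<Gamma>, add_mset E \<Delta>), \<pi>)"
    and \<Gamma>: "image_mset (asubst (Var(x := s))) \<Gamma>l \<union># \<Gamma>r = \<Gamma>" and \<Delta>: "\<Delta>l \<union># \<Delta>r = \<Delta>"
    and N': "N' = (N - {((\<Gamma>, add_mset E \<Delta>), \<pi>)}) \<union>
      {((add_mset (Atom S [Var x]) \<Gamma>l, add_mset (atom_replace E p (Var x)) \<Delta>l), \<pi>),
       ((\<Gamma>r, add_mset (Atom S [s]) \<Delta>r), \<pi>)}"
    unfolding SH_step_def by blast
  show ?thesis by (rule model_replace_clause[OF assms(2) N']) (rule SH_sound[OF _ _ at x \<Gamma> \<Delta>]; blast)
qed

lemma LI1_step_model:
  assumes "LI1_step N N'" "\<forall>D\<in>N'. sat_cc I D"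
  shows "\<forall>D\<in>N. sat_cc I D"
proof -
  from assms(1) obtain \<Gamma> \<Delta> E' E p q x x' \<pi> where at: "atom_at E q = Some (Var x)"
    and x': "x' \<notin> vars_cc ((\<Gamma>, \<Delta> + {#E', E#}), \<pi>)"
    and N': "N' = (N - {((\<Gamma>, \<Delta> + {#E', E#}), \<pi>)}) \<union>
      {((image_mset (asubst (Var(x := Var x'))) \<Gamma> + \<Gamma>, \<Delta> + {#E', atom_replace E q (Var x')#}),
        \<pi> @ constr_subst (Var(x := Var x')) \<pi>)}"
    unfolding LI1_step_def by blast
  have "\<Delta> + {#E', E#} = add_mset E (add_mset E' \<Delta>)"
    and "\<Delta> + {#E', atom_replace E q (Var x')#} = add_mset (atom_replace E q (Var x')) (add_mset E' \<Delta>)"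
    by simp_all
  then show ?thesis
    using x' by (intro model_replace_clause[OF assms(2) N']) (simp only:, rule LI_sound[OF _ at]; blast)
qed

lemma LI2_step_model:
  assumes "LI2_step N N'" "\<forall>D\<in>N'. sat_cc I D"
  shows "\<forall>D\<in>N. sat_cc I D"
proof -
  from assms(1) obtain \<Gamma> \<Delta> E p q x x' \<pi> where at: "atom_at E q = Some (Var x)"
    and x': "x' \<notin> vars_cc ((\<Gamma>, add_mset E \<Delta>), \<pi>)"
    and N': "N' = (N - {((\<Gamma>, add_mset E \<Delta>), \<pi>)}) \<union>
      {((image_mset (asubst (Var(x := Var x'))) \<Gamma> + \<Gamma>, add_mset (atom_replace E q (Var x')) \<Delta>),
        \<pi> @ constr_subst (Var(x := Var x')) \<pi>)}"
    unfolding LI2_step_def by blast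
  show ?thesis by (rule model_replace_clause[OF assms(2) N']) (rule LI_sound[OF _ at x']; blast)
qed

lemma MO_step_sound: "MO_step T fP N N' \<Longrightarrow> satisfiable N' \<Longrightarrow> satisfiable N"
proof -
  assume "MO_step T fP N N'" "satisfiable N'"
  then obtain P I where N': "N' = proj_cc T fP P ` N" and model: "\<forall>D\<in>N'. sat_cc I D"
    unfolding MO_step_def satisfiable_def by blast
  have "\<forall>D\<in>N. sat_cc {A. ground_a A \<and> proj_a T fP P A \<in> I} D"
  proof
    fix D assume "D \<in> N"
    then have "sat_cc I (proj_cc T fP P D)" using model N' by blast
    then show "sat_cc {A. ground_a A \<and> proj_a T fP P A \<in> I} D" by (rule MO_sound)
  qed
  then show "satisfiable N"
    unfolding satisfiable_def by (intro exI[of _ "{A. ground_a A \<and> proj_a T fP P A \<in> I}"]) simp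
qed

lemma AP_step_sound:
  assumes step: "AP_step T fP N N'" and sat: "satisfiable N'"
  shows "satisfiable N"
proof (cases "MO_step T fP N N'")
  case True
  then show ?thesis using sat by (rule MO_step_sound)
next
  case False
  from sat obtain I where ground: "\<forall>A\<in>I. ground_a A" and model: "\<forall>D\<in>N'. sat_cc I D"
    unfolding satisfiable_def by blast
  have "Ref_step N N' \<or> SH_step T N N' \<or> LI1_step N N' \<or> LI2_step N N'"
    using step False unfolding AP_step_def AP_noref_step_def by blast
  then have "\<forall>D\<in>N. sat_cc I D"
  proof (elim disjE)
    show "Ref_step N N' \<Longrightarrow> ?thesis" by (rule Ref_step_model[OF _ model])
    show "SH_step T N N' \<Longrightarrow> ?thesis" by (rule SH_step_model[OF _ model])
    show "LI1_step N N' \<Longrightarrow> ?thesis" by (rule LI1_step_model[OF _ model])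
    show "LI2_step N N' \<Longrightarrow> ?thesis" by (rule LI2_step_model[OF _ model])
  qed
  then show ?thesis using ground unfolding satisfiable_def by (intro exI[of _ I] conjI)
qed

lemma AP_terminates:
  assumes "finite N"
  shows "\<nexists>Ns. Ns 0 = N \<and> (\<forall>i. AP_step T fP (Ns i) (Ns (Suc i))) \<and>
    (\<exists>k. \<forall>i \<ge> k. AP_noref_step T fP (Ns i) (Ns (Suc i)))"
proof
  assume "\<exists>Ns. Ns 0 = N \<and> (\<forall>i. AP_step T fP (Ns i) (Ns (Suc i))) \<and>
    (\<exists>k. \<forall>i \<ge> k. AP_noref_step T fP (Ns i) (Ns (Suc i)))"
  then obtain Ns k where N0: "Ns 0 = N" and steps: "\<forall>i. AP_step T fP (Ns i) (Ns (Suc i))"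
    and noref: "\<forall>i \<ge> k. AP_noref_step T fP (Ns i) (Ns (Suc i))"
    by blast
  have fin: "finite (Ns i)" for i
  proof (induction i)
    case (Suc i)
    then show ?case using steps by (blast intro: AP_step_finite)
  qed (simp add: N0 assms)
  have "(Ns (k + Suc i), Ns (k + i)) \<in> AP_order" for i
  proof -
    have "AP_noref_step T fP (Ns (k + i)) (Ns (Suc (k + i)))" using noref by simp
    then show ?thesis by (simp add: AP_noref_step_decreasing[OF fin])
  qed
  moreover obtain j where "(Ns (k + Suc j), Ns (k + j)) \<notin> AP_order"
    using wf_no_infinite_down_chainE[OF wf_AP_order, of "\<lambda>i. Ns (k + i)"] by auto
  ultimately show False by blast
qed

theorem lemma6:
  fixes N :: "('p, 'f, 'v) cclause set"
    and T :: 'p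
    and fP :: "'p \<times> nat \<Rightarrow> 'f"
  assumes fin: "finite N"
    and wf: "\<forall>C \<in> N. wf_cclause C"
    and T_fresh: "(T, 1) \<notin> preds N"
    and fP_fresh: "\<forall>P. snd P \<noteq> 1 \<longrightarrow> (fP P, snd P) \<notin> funs N"
    and fP_inj: "inj_on fP {P. snd P \<noteq> 1}"
  shows "\<not> (\<exists>Ns :: nat \<Rightarrow> ('p, 'f, 'v) cclause set.
              Ns 0 = N \<and> (\<forall>i. AP_step T fP (Ns i) (Ns (Suc i))) \<and>
              (\<exists>k. \<forall>i \<ge> k. AP_noref_step T fP (Ns i) (Ns (Suc i)))) \<and>
         (\<forall>N'. AP_step T fP N N' \<and> satisfiable N' \<longrightarrow> satisfiable N)"
  using AP_terminates[OF fin, of T fP] AP_step_sound[of T fP N] by blast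

end
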